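(* Let $\mathbb{X},\mathbb{Y}$ be two-dimensional smooth real Banach spaces, with $\mathbb{Y}$ in addition strictly convex. Let $T\in\mathbb{L}(\mathbb{X},\mathbb{Y})$ be of rank one with $\|T\|=1$. If $(x,Tx)$ is not a CPP for some $x\in M_T$, then $T$ is an extreme contraction.
   Context: $M_T=\{x\in S_{\mathbb{X}}:\|Tx\|=\|T\|\}$. A norm one $T$ is an extreme contraction if it is an extreme point of the closed unit ball of $\mathbb{L}(\mathbb{X},\mathbb{Y})$. $B(x,r)=\{u:\|u-x\|<r\}$. $x\perp_B y$ means $\|x+\lambda y\|\ge\|x\|$ for all real $\lambda$; $x^\perp=\{y:x\perp_By\}$. For $x\in S_{\mathbb{X}}$, $y\in S_{\mathbb{Y}}$, $(x,y)$ is a CPP if there exist $r>0,\mu>0$ such that for all $z\in x^\perp\cap S_{\mathbb{X}}$, all $w\in y^\perp\cap S_{\mathbb{Y}}$ and all $a,b\in\mathbb{R}$, $ax+bz\in B(x,r)\cap S_{\mathbb{X}}$ implies $\|ay+b\mu w\|\le1$. *)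

theory Defs
  imports "HOL-Analysis.Analysis"
begin

definition smooth_space :: "'a::real_normed_vector itself \<Rightarrow> bool" where
  "smooth_space _ \<longleftrightarrow>
     (\<forall>x::'a. norm x = 1 \<longrightarrow> (\<exists>!f::'a \<Rightarrow>\<^sub>L real. norm f = 1 \<and> blinfun_apply f x = 1))"

definition strictly_convex_space :: "'a::real_normed_vector itself \<Rightarrow> bool" where
  "strictly_convex_space _ \<longleftrightarrow>
     (\<forall>x y::'a. norm x = 1 \<longrightarrow> norm y = 1 \<longrightarrow> x \<noteq> y \<longrightarrow> norm ((1/2) *\<^sub>R (x + y)) < 1)"

definition birkhoff_orth :: "'a::real_normed_vector \<Rightarrow> 'a \<Rightarrow> bool" where
  "birkhoff_orth x y \<longleftrightarrow> (\<forall>t::real. norm (x + t *\<^sub>R y) \<ge> norm x)"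

definition norm_attain_set :: "('a::real_normed_vector \<Rightarrow>\<^sub>L 'b::real_normed_vector) \<Rightarrow> 'a set" where
  "norm_attain_set T = {x. norm x = 1 \<and> norm (blinfun_apply T x) = norm T}"

definition CPP :: "'a::real_normed_vector \<Rightarrow> 'b::real_normed_vector \<Rightarrow> bool" where
  "CPP x y \<longleftrightarrow> norm x = 1 \<and> norm y = 1 \<and>
     (\<exists>r>0. \<exists>\<mu>>0. \<forall>z w a b.
        birkhoff_orth x z \<longrightarrow> norm z = 1 \<longrightarrow> birkhoff_orth y w \<longrightarrow> norm w = 1 \<longrightarrow>
        (a *\<^sub>R x + b *\<^sub>R z \<in> ball x r \<and> norm (a *\<^sub>R x + b *\<^sub>R z) = 1) \<longrightarrow>
        norm (a *\<^sub>R y + (b * \<mu>) *\<^sub>R w) \<le> 1)"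

definition extreme_contraction :: "('a::real_normed_vector \<Rightarrow>\<^sub>L 'b::real_normed_vector) \<Rightarrow> bool" where
  "extreme_contraction T \<longleftrightarrow> norm T = 1 \<and> T extreme_point_of (cball 0 1)"

end

theory Submission
  imports Defs
begin

text \<open>Suppose \<open>T\<close> is not extreme, so \<open>\<parallel>T \<plusminus> S\<parallel> \<le> 1\<close> for some \<open>S \<noteq> 0\<close>, and let \<open>x \<in> M\<^sub>T\<close>, \<open>y = T x\<close>.
  Strict convexity of \<open>\<Y>\<close> forces \<open>S x = 0\<close>. If \<open>h\<close> is the supporting functional at \<open>y\<close>, then
  \<open>h \<circ> T\<close> and \<open>h \<circ> (T + S)\<close> both support the unit ball of \<open>\<X>\<close> at \<open>x\<close>, so by smoothness they vanish on
  \<open>x\<^sup>\<bottom>\<close>; as \<open>T\<close> has rank one, \<open>T\<close> itself vanishes there and \<open>S\<close> maps \<open>x\<^sup>\<bottom>\<close> into \<open>ker h = y\<^sup>\<bottom>\<close>.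
  In dimension two \<open>x\<^sup>\<bottom>\<close> and \<open>y\<^sup>\<bottom>\<close> are lines, so \<open>S z = \<plusminus>\<mu> w\<close> for unit \<open>z \<in> x\<^sup>\<bottom>\<close>, \<open>w \<in> y\<^sup>\<bottom>\<close>
  and a fixed \<open>\<mu> > 0\<close>. Hence \<open>a y + b \<mu> w = (T \<plusminus> S)(a x + b z)\<close> has norm at most
  \<open>\<parallel>a x + b z\<parallel>\<close>, i.e. \<open>(x, y)\<close> is a CPP (for any radius).\<close>

lemma independent_card_eq_dim_span:
  fixes B V :: "'a::real_vector set"
  assumes "B \<subseteq> V" "independent B" "finite B" "card B = dim V" "card B > 0"
  shows "V \<subseteq> span B"
  \<comment> \<open>\<open>card B > 0\<close> matters: \<open>dim\<close> is \<open>0\<close> on infinite-dimensional spaces.\<close>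
proof
  fix p assume "p \<in> V"
  show "p \<in> span B"
  proof (rule ccontr)
    assume p: "p \<notin> span B"
    then have ind: "independent (insert p B)"
      using assms(2) by (rule independent_insertI)
    obtain A where A: "A \<subseteq> V" "independent A" "V \<subseteq> span A" "card A = dim V"
      by (rule basis_exists)
    have "finite A"
      using A(4) assms(4,5) card_ge_0_finite[of A] by simp
    moreover have "insert p B \<subseteq> span A"
      using A(3) assms(1) \<open>p \<in> V\<close> by auto
    ultimately have "card (insert p B) \<le> card A"
      using independent_span_bound[OF _ ind] by blast
    moreover have "card (insert p B) = card B + 1"
      using p span_base assms(3) by (metis Suc_eq_plus1 card_insert_disjoint)
    ultimately show False
      using assms(4) A(4) by linarith
  qed
qed

lemma birkhoff_orth_coeff_le_norm:
  fixes u v :: "'a::real_normed_vector"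
  assumes "birkhoff_orth u v"
  shows "\<bar>a\<bar> * norm u \<le> norm (a *\<^sub>R u + b *\<^sub>R v)"
proof (cases "a = 0")
  case False
  have "a *\<^sub>R u + b *\<^sub>R v = a *\<^sub>R (u + (b / a) *\<^sub>R v)"
    using False by (simp add: algebra_simps)
  moreover have "norm u \<le> norm (u + (b / a) *\<^sub>R v)"
    using assms unfolding birkhoff_orth_def by blast
  ultimately show ?thesis
    by (simp add: mult_left_mono)
qed simp

lemma birkhoff_orth_not_in_span:
  fixes u v :: "'a::real_normed_vector"
  assumes "birkhoff_orth u v" "u \<noteq> 0"
  shows "u \<notin> span {v}"
proof
  assume "u \<in> span {v}"
  then obtain k where "u = k *\<^sub>R v"
    by (auto simp: span_singleton)
  have "norm u \<le> norm (1 *\<^sub>R u + (- k) *\<^sub>R v)"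
    using birkhoff_orth_coeff_le_norm[OF assms(1), of 1 "- k"] by simp
  also have "\<dots> = 0"
    using \<open>u = k *\<^sub>R v\<close> by simp
  finally show False
    using assms(2) by simp
qed

lemma birkhoff_orth_independent:
  fixes u v :: "'a::real_normed_vector"
  assumes "birkhoff_orth u v" "u \<noteq> 0" "v \<noteq> 0"
  shows "independent {u, v}" "u \<noteq> v"
proof -
  have "u \<notin> span {v}"
    using birkhoff_orth_not_in_span assms(1,2) .
  then show "u \<noteq> v" "independent {u, v}"
    using assms(3) span_base[of v "{v}"] by (auto simp: independent_insert)
qed

lemma birkhoff_orth_decomposition:
  fixes u v :: "'a::real_normed_vector"
  assumes "dim (UNIV :: 'a set) = 2" "birkhoff_orth u v" "u \<noteq> 0" "v \<noteq> 0"
  obtains a b where "p = a *\<^sub>R u + b *\<^sub>R v"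
proof -
  have "UNIV \<subseteq> span {u, v}"
    using independent_card_eq_dim_span[of "{u, v}" UNIV] birkhoff_orth_independent[OF assms(2-4)]
      assms(1) by simp
  then have "p \<in> span {u, v}"
    by blast
  then obtain a where "p - a *\<^sub>R u \<in> span {v}"
    by (auto simp: span_insert)
  then obtain b where "p - a *\<^sub>R u = b *\<^sub>R v"
    by (auto simp: span_singleton)
  then show thesis
    using that[of a b] by (simp add: algebra_simps)
qed

lemma blinfun_apply_norm_le:
  fixes A :: "'a::real_normed_vector \<Rightarrow>\<^sub>L 'b::real_normed_vector"
  assumes "norm A \<le> 1"
  shows "norm (blinfun_apply A p) \<le> norm p"
  using norm_blinfun[of A p] mult_right_mono[OF assms norm_ge_zero[of p]] by simp

lemma birkhoff_orth_supporting_functional: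
  fixes u v :: "'a::real_normed_vector"
  assumes "dim (UNIV :: 'a set) = 2" "norm u = 1" "birkhoff_orth u v" "v \<noteq> 0"
  obtains f :: "'a \<Rightarrow>\<^sub>L real" where "norm f = 1" "blinfun_apply f u = 1" "blinfun_apply f v = 0"
proof -
  have "u \<noteq> 0"
    using assms(2) by auto
  note uv = birkhoff_orth_independent[OF assms(3) \<open>u \<noteq> 0\<close> assms(4)]
  obtain g :: "'a \<Rightarrow> real" where g: "linear g" "\<forall>w\<in>{u, v}. g w = (if w = u then 1 else 0)"
    using linear_independent_extend[OF uv(1), of "\<lambda>w. if w = u then 1 else 0"] by blast
  have gu: "g u = 1" and gv: "g v = 0"
    using g(2) uv(2) by auto
  have "norm (g p) \<le> norm p" for p
  proof -
    obtain a b where p: "p = a *\<^sub>R u + b *\<^sub>R v"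
      using birkhoff_orth_decomposition[OF assms(1,3) \<open>u \<noteq> 0\<close> assms(4)] .
    have "g p = a"
      using p gu gv g(1) by (simp add: linear_add linear_scale)
    then show ?thesis
      using birkhoff_orth_coeff_le_norm[OF assms(3), of a b] p assms(2) by simp
  qed
  then have "bounded_linear g"
    using g(1) by (intro bounded_linear_intro[where K = 1]) (auto simp: linear_add linear_scale)
  define f where "f = Blinfun g"
  have f: "blinfun_apply f = g"
    unfolding f_def using \<open>bounded_linear g\<close> by (rule bounded_linear_Blinfun_apply)
  have "norm f \<le> 1"
    using \<open>\<And>p. norm (g p) \<le> norm p\<close> by (intro norm_blinfun_bound) (auto simp: f)
  moreover have "1 \<le> norm f"
    using norm_blinfun[of f u] gu assms(2) by (simp add: f)
  ultimately show thesis
    using that[of f] f gu gv by simp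
qed

lemma smooth_supporting_functional_orth:
  fixes u v :: "'a::real_normed_vector" and \<phi> :: "'a \<Rightarrow>\<^sub>L real"
  assumes "smooth_space TYPE('a)" "dim (UNIV :: 'a set) = 2"
    and "norm u = 1" "birkhoff_orth u v" "norm \<phi> \<le> 1" "blinfun_apply \<phi> u = 1"
  shows "blinfun_apply \<phi> v = 0"
proof (cases "v = 0")
  case False
  obtain f :: "'a \<Rightarrow>\<^sub>L real" where f: "norm f = 1" "blinfun_apply f u = 1" "blinfun_apply f v = 0"
    using birkhoff_orth_supporting_functional[OF assms(2-4) False] by blast
  have "norm \<phi> = 1"
    using norm_blinfun[of \<phi> u] assms(3,5,6) by simp
  then have "\<phi> = f"
    using assms(1,3,6) f unfolding smooth_space_def by blast
  then show ?thesis
    using f(3) by simp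
qed simp

lemma smooth_supporting_functional_kernel:
  fixes u w v :: "'a::real_normed_vector" and \<phi> :: "'a \<Rightarrow>\<^sub>L real"
  assumes "smooth_space TYPE('a)" "dim (UNIV :: 'a set) = 2"
    and "norm u = 1" "birkhoff_orth u w" "w \<noteq> 0"
    and "norm \<phi> \<le> 1" "blinfun_apply \<phi> u = 1" "blinfun_apply \<phi> v = 0"
  obtains \<beta> where "v = \<beta> *\<^sub>R w"
proof -
  have "u \<noteq> 0"
    using assms(3) by auto
  obtain a b where v: "v = a *\<^sub>R u + b *\<^sub>R w"
    using birkhoff_orth_decomposition[OF assms(2,4) \<open>u \<noteq> 0\<close> assms(5)] .
  have "blinfun_apply \<phi> w = 0"
    using smooth_supporting_functional_orth[OF assms(1-4,6,7)] .
  then have "a = 0"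
    using assms(7,8) v by (simp add: blinfun.add_right blinfun.scaleR_right)
  then show thesis
    using that[of b] v by simp
qed

lemma smooth_birkhoff_orth_unit_unique:
  fixes x z z' :: "'a::real_normed_vector"
  assumes "smooth_space TYPE('a)" "dim (UNIV :: 'a set) = 2" "norm x = 1"
    and "birkhoff_orth x z" "norm z = 1" "birkhoff_orth x z'" "norm z' = 1"
  shows "z' = z \<or> z' = - z"
proof -
  obtain f :: "'a \<Rightarrow>\<^sub>L real" where f: "norm f = 1" "blinfun_apply f x = 1"
    using assms(1,3) unfolding smooth_space_def by blast
  have "z \<noteq> 0"
    using assms(5) by auto
  have "blinfun_apply f z' = 0"
    using smooth_supporting_functional_orth[OF assms(1-3,6)] f by simp
  then obtain \<beta> where \<beta>: "z' = \<beta> *\<^sub>R z"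
    using smooth_supporting_functional_kernel[OF assms(1-4) \<open>z \<noteq> 0\<close> _ f(2)] f(1) by auto
  then have "\<bar>\<beta>\<bar> = 1"
    using assms(5,7) by simp
  then show ?thesis
    using \<beta> by (cases "\<beta> \<ge> 0") auto
qed

lemma strictly_convex_symmetric_perturbation_eq_0:
  fixes y v :: "'a::real_normed_vector"
  assumes "strictly_convex_space TYPE('a)" "norm y = 1" "norm (y + v) \<le> 1" "norm (y - v) \<le> 1"
  shows "v = 0"
proof (rule ccontr)
  assume "v \<noteq> 0"
  have "2 = norm ((y + v) + (y - v))"
    using assms(2) by (simp flip: scaleR_2)
  also have "\<dots> \<le> norm (y + v) + norm (y - v)"
    by (rule norm_triangle_ineq)
  finally have "norm (y + v) = 1" "norm (y - v) = 1"
    using assms(3,4) by auto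
  moreover have "y + v \<noteq> y - v"
    using \<open>v \<noteq> 0\<close> by (simp add: algebra_simps flip: scaleR_2)
  ultimately have "norm ((1/2) *\<^sub>R ((y + v) + (y - v))) < 1"
    using assms(1) unfolding strictly_convex_space_def by blast
  then show False
    using assms(2) by (simp flip: scaleR_2)
qed

lemma not_extreme_point_of_convexE:
  fixes x :: "'a::real_vector"
  assumes "convex C" "x \<in> C" "\<not> x extreme_point_of C"
  obtains s where "s \<noteq> 0" "x + s \<in> C" "x - s \<in> C"
proof -
  obtain a b where ab: "a \<in> C" "b \<in> C" "x \<in> open_segment a b"
    using assms(2,3) unfolding extreme_point_of_def by blast
  then obtain t where t: "0 < t" "t < 1" "x = (1 - t) *\<^sub>R a + t *\<^sub>R b" and "a \<noteq> b"
    unfolding in_segment by blast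
  define c where "c = min t (1 - t)"
  have c: "0 < c" "c \<le> t" "c \<le> 1 - t"
    using t(1,2) unfolding c_def by auto
  have "x + c *\<^sub>R (b - a) = (1 - t - c) *\<^sub>R a + (t + c) *\<^sub>R b"
    using t(3) by (simp add: algebra_simps)
  moreover have "x - c *\<^sub>R (b - a) = (1 - t + c) *\<^sub>R a + (t - c) *\<^sub>R b"
    using t(3) by (simp add: algebra_simps)
  ultimately have "x + c *\<^sub>R (b - a) \<in> C" "x - c *\<^sub>R (b - a) \<in> C"
    using convexD[OF assms(1) ab(1,2)] c by auto
  moreover have "c *\<^sub>R (b - a) \<noteq> 0"
    using c(1) \<open>a \<noteq> b\<close> by simp
  ultimately show thesis
    using that by blast
qed

lemma rank_one_birkhoff_orth_kernels:
  fixes T S :: "'a::real_normed_vector \<Rightarrow>\<^sub>L 'b::real_normed_vector" and h :: "'b \<Rightarrow>\<^sub>L real"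
  assumes "smooth_space TYPE('a)" "dim (UNIV :: 'a set) = 2" "norm x = 1"
    and "range (blinfun_apply T) \<subseteq> span {blinfun_apply T x}"
    and "norm T \<le> 1" "norm (T + S) \<le> 1" "blinfun_apply S x = 0"
    and "norm h \<le> 1" "blinfun_apply h (blinfun_apply T x) = 1"
    and "birkhoff_orth x z"
  shows "blinfun_apply T z = 0" "blinfun_apply h (blinfun_apply S z) = 0"
proof -
  have "norm (h o\<^sub>L A) \<le> 1" if "norm A \<le> 1" for A :: "'a \<Rightarrow>\<^sub>L 'b"
    using norm_blinfun_compose[of h A] mult_le_one[OF assms(8) norm_ge_zero that] by linarith
  then have "norm (h o\<^sub>L T) \<le> 1" "norm (h o\<^sub>L (T + S)) \<le> 1"
    using assms(5,6) by blast+
  moreover have "blinfun_apply (h o\<^sub>L T) x = 1" "blinfun_apply (h o\<^sub>L (T + S)) x = 1"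
    using assms(7,9) by (simp_all add: blinfun.add_left)
  ultimately have "blinfun_apply (h o\<^sub>L T) z = 0" "blinfun_apply (h o\<^sub>L (T + S)) z = 0"
    using smooth_supporting_functional_orth[OF assms(1-3,10)] by blast+
  then have hTz: "blinfun_apply h (blinfun_apply T z) = 0"
    and hTSz: "blinfun_apply h (blinfun_apply T z + blinfun_apply S z) = 0"
    by (simp_all add: blinfun.add_left)
  obtain k where k: "blinfun_apply T z = k *\<^sub>R blinfun_apply T x"
    using assms(4) by (auto simp: span_singleton)
  then show "blinfun_apply T z = 0"
    using hTz assms(9) by (simp add: blinfun.scaleR_right)
  then show "blinfun_apply h (blinfun_apply S z) = 0"
    using hTSz by simp
qed

lemma smooth_birkhoff_orth_unit_norm_const:
  fixes S :: "'a::real_normed_vector \<Rightarrow>\<^sub>L 'b::real_normed_vector"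
  assumes "smooth_space TYPE('a)" "dim (UNIV :: 'a set) = 2" "norm x = 1"
    and "blinfun_apply S x = 0" "S \<noteq> 0"
  obtains \<mu> where "\<mu> > 0" "\<And>z. norm z = 1 \<Longrightarrow> birkhoff_orth x z \<Longrightarrow> norm (blinfun_apply S z) = \<mu>"
proof (cases "\<exists>z. norm z = 1 \<and> birkhoff_orth x z")
  case True
  then obtain z\<^sub>1 where z\<^sub>1: "norm z\<^sub>1 = 1" "birkhoff_orth x z\<^sub>1"
    by blast
  have "x \<noteq> 0" "z\<^sub>1 \<noteq> 0"
    using assms(3) z\<^sub>1(1) by auto
  have "blinfun_apply S z\<^sub>1 \<noteq> 0"
  proof
    assume "blinfun_apply S z\<^sub>1 = 0"
    have "blinfun_apply S p = 0" for p
    proof -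
      obtain a b where "p = a *\<^sub>R x + b *\<^sub>R z\<^sub>1"
        using birkhoff_orth_decomposition[OF assms(2) z\<^sub>1(2) \<open>x \<noteq> 0\<close> \<open>z\<^sub>1 \<noteq> 0\<close>] .
      then show ?thesis
        using assms(4) \<open>blinfun_apply S z\<^sub>1 = 0\<close> by (simp add: blinfun.add_right blinfun.scaleR_right)
    qed
    then have "S = 0"
      by (intro blinfun_eqI) simp
    then show False
      using assms(5) by simp
  qed
  moreover have "norm (blinfun_apply S z) = norm (blinfun_apply S z\<^sub>1)"
    if "norm z = 1" "birkhoff_orth x z" for z
    using smooth_birkhoff_orth_unit_unique[OF assms(1-3) z\<^sub>1(2,1) that(2,1)]
    by (auto simp: blinfun.minus_right)
  ultimately show thesis
    using that[of "norm (blinfun_apply S z\<^sub>1)"] by simp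
next
  case False
  then show thesis
    using that[of 1] by auto
qed

lemma CPP_if_symmetric_perturbation:
  fixes T S :: "'a::real_normed_vector \<Rightarrow>\<^sub>L 'b::real_normed_vector"
  assumes "dim (UNIV :: 'a set) = 2" "dim (UNIV :: 'b set) = 2"
    and "smooth_space TYPE('a)" "smooth_space TYPE('b)" "strictly_convex_space TYPE('b)"
    and "dim (range (blinfun_apply T)) = 1" "norm T = 1"
    and "S \<noteq> 0" "norm (T + S) \<le> 1" "norm (T - S) \<le> 1"
    and "x \<in> norm_attain_set T"
  shows "CPP x (blinfun_apply T x)"
proof -
  define y where "y = blinfun_apply T x"
  have x: "norm x = 1" and y: "norm y = 1"
    using assms(7,11) unfolding norm_attain_set_def y_def by auto
  have TpS: "norm (blinfun_apply (T + S) p) \<le> norm p"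
    and TmS: "norm (blinfun_apply (T - S) p) \<le> norm p" for p
    using blinfun_apply_norm_le assms(9,10) by blast+
  have Sx: "blinfun_apply S x = 0"
    using strictly_convex_symmetric_perturbation_eq_0[OF assms(5) y] TpS[of x] TmS[of x] x
    by (simp add: y_def blinfun.add_left blinfun.diff_left)
  have "y \<noteq> 0"
    using y by auto
  then have rng: "range (blinfun_apply T) \<subseteq> span {y}"
    using independent_card_eq_dim_span[of "{y}" "range (blinfun_apply T)"] assms(6)
    by (simp add: y_def)
  obtain h :: "'b \<Rightarrow>\<^sub>L real" where h: "norm h = 1" "blinfun_apply h y = 1"
    using assms(4) y unfolding smooth_space_def by blast
  have "norm T \<le> 1" "norm h \<le> 1"
    using assms(7) h(1) by simp_all
  note orth_kernels =
    rank_one_birkhoff_orth_kernels[OF assms(3,1) x rng[unfolded y_def] \<open>norm T \<le> 1\<close> assms(9) Sx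
      \<open>norm h \<le> 1\<close> h(2)[unfolded y_def]]
  obtain \<mu> where \<mu>: "\<mu> > 0" "\<And>z. norm z = 1 \<Longrightarrow> birkhoff_orth x z \<Longrightarrow> norm (blinfun_apply S z) = \<mu>"
    using smooth_birkhoff_orth_unit_norm_const[OF assms(3,1) x Sx assms(8)] by blast
  have "norm (a *\<^sub>R y + (b * \<mu>) *\<^sub>R w) \<le> 1"
    if xz: "birkhoff_orth x z" and z: "norm z = 1" and yw: "birkhoff_orth y w" and w: "norm w = 1"
      and xz_unit: "norm (a *\<^sub>R x + b *\<^sub>R z) = 1" for z w a b
  proof -
    have Tz: "blinfun_apply T z = 0" and hSz: "blinfun_apply h (blinfun_apply S z) = 0"
      using orth_kernels[OF xz] by simp_all
    have "w \<noteq> 0"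
      using w by auto
    obtain \<beta> where \<beta>: "blinfun_apply S z = \<beta> *\<^sub>R w"
      using smooth_supporting_functional_kernel[OF assms(4,2) y yw \<open>w \<noteq> 0\<close> _ h(2) hSz] h(1)
      by auto
    have "\<bar>\<beta>\<bar> = \<mu>"
      using \<mu>(2)[OF z xz] \<beta> w by simp
    then have "\<beta> = \<mu> \<or> \<beta> = - \<mu>"
      by auto
    moreover have "blinfun_apply (T + S) (a *\<^sub>R x + b *\<^sub>R z) = a *\<^sub>R y + (b * \<beta>) *\<^sub>R w"
      and "blinfun_apply (T - S) (a *\<^sub>R x + b *\<^sub>R z) = a *\<^sub>R y + (b * - \<beta>) *\<^sub>R w"
      using Tz Sx \<beta> by (simp_all add: y_def blinfun.add_left blinfun.diff_left
          blinfun.add_right blinfun.scaleR_right)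
    ultimately show ?thesis
      using TpS[of "a *\<^sub>R x + b *\<^sub>R z"] TmS[of "a *\<^sub>R x + b *\<^sub>R z"] xz_unit by auto
  qed
  then show ?thesis
    unfolding CPP_def y_def[symmetric] using x y \<mu>(1) zero_less_one by blast
qed

theorem mainTheorem5:
  fixes T :: "'a::banach \<Rightarrow>\<^sub>L 'b::banach"
  assumes "dim (UNIV :: 'a set) = 2" and "dim (UNIV :: 'b set) = 2"
    and "smooth_space TYPE('a)" and "smooth_space TYPE('b)"
    and "strictly_convex_space TYPE('b)"
    and "dim (range (blinfun_apply T)) = 1"
    and "norm T = 1"
    and "\<exists>x \<in> norm_attain_set T. \<not> CPP x (blinfun_apply T x)"
  shows "extreme_contraction T"
proof (rule ccontr)
  assume "\<not> extreme_contraction T"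
  then have "\<not> T extreme_point_of cball 0 1"
    using assms(7) unfolding extreme_contraction_def by simp
  then obtain S where "S \<noteq> 0" "T + S \<in> cball 0 1" "T - S \<in> cball 0 1"
    using not_extreme_point_of_convexE[OF convex_cball] assms(7) by (metis mem_cball_0 order_refl)
  then show False
    using CPP_if_symmetric_perturbation[OF assms(1-7)] assms(8) by auto
qed

end
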